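(* Let $A=\sum\{A_{ij}\mid i,j\in I\}$ be a generalized matrix ring having left and right gm non-zero divisors, and suppose that the largest gm ideal of $A$ contained in $r_n(A)$ is zero. Then $r_n(A_{ij})=0$ for all $i,j\in I$.
   Context: A generalized matrix (gm) ring: $I$ is a nonempty index set; for $i,j\in I$, $A_{ij}$ are additive groups with biadditive associative maps $A_{ij}\times A_{jl}\to A_{il}$. $A$ is the external direct sum of the $A_{ij}$ with $(xy)_{ij}=\sum_k x_{ik}y_{kj}$. A gm ideal is an ideal $B$ of $A$ with $B=\sum\{B_{ij}\}$, $B_{ij}\subseteq A_{ij}$. Each $A_{ij}$ is regarded as a $\Gamma$-ring with $\Gamma=A_{ji}$: an ideal is an additive subgroup $B\subseteq A_{ij}$ with $A_{ij}A_{ji}B\subseteq B$, $BA_{ji}A_{ij}\subseteq B$; $x\in A_{ij}$ is von Neumann regular if $x=xyx$ for some $y\in A_{ji}$; $r_n(A_{ij})$ is the largest ideal consisting of von Neumann regular elements. $r_n(A)$ is the largest ideal of the ring $A$ consisting of von Neumann regular elements. $A$ has left and right gm non-zero divisors means: for all $s,t\in I$ there is $0\neq d_{st}\in A_{st}$ with $xd_{st}\neq0$ and $d_{st}y\neq0$ for all $i,j\in I$ and all nonzero $x\in A_{is}$, $y\in A_{tj}$. *)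

theory Defs
  imports Main
begin

text \<open>A generalized matrix (gm) ring over the index type 'i (the index set I is UNIV :: 'i set,
  nonempty automatically). The additive groups A_ij are carriers G i j, additive subgroups of a
  common abelian group 'a; the map A_ij x A_jl -> A_il is mult i j l.\<close>

definition gm_ring :: "('i \<Rightarrow> 'i \<Rightarrow> 'a::ab_group_add set) \<Rightarrow> ('i \<Rightarrow> 'i \<Rightarrow> 'i \<Rightarrow> 'a \<Rightarrow> 'a \<Rightarrow> 'a) \<Rightarrow> bool" where
  "gm_ring G mult \<longleftrightarrow>
     (\<forall>i j. 0 \<in> G i j \<and> (\<forall>x\<in>G i j. \<forall>y\<in>G i j. x + y \<in> G i j) \<and> (\<forall>x\<in>G i j. - x \<in> G i j)) \<and>
     (\<forall>i j l. \<forall>x\<in>G i j. \<forall>y\<in>G j l. mult i j l x y \<in> G i l) \<and>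
     (\<forall>i j l. \<forall>x\<in>G i j. \<forall>x'\<in>G i j. \<forall>y\<in>G j l. mult i j l (x + x') y = mult i j l x y + mult i j l x' y) \<and>
     (\<forall>i j l. \<forall>x\<in>G i j. \<forall>y\<in>G j l. \<forall>y'\<in>G j l. mult i j l x (y + y') = mult i j l x y + mult i j l x y') \<and>
     (\<forall>i j l m. \<forall>x\<in>G i j. \<forall>y\<in>G j l. \<forall>z\<in>G l m.
        mult i l m (mult i j l x y) z = mult i j m x (mult j l m y z))"

text \<open>The ring A: the external direct sum of the A_ij (finitely supported families).\<close>

definition gm_carrier :: "('i \<Rightarrow> 'i \<Rightarrow> 'a::ab_group_add set) \<Rightarrow> ('i \<Rightarrow> 'i \<Rightarrow> 'a) set" where
  "gm_carrier G = {x. (\<forall>i j. x i j \<in> G i j) \<and> finite {(i, j). x i j \<noteq> 0}}"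

definition gm_add :: "('i \<Rightarrow> 'i \<Rightarrow> 'a::ab_group_add) \<Rightarrow> ('i \<Rightarrow> 'i \<Rightarrow> 'a) \<Rightarrow> ('i \<Rightarrow> 'i \<Rightarrow> 'a)" where
  "gm_add x y = (\<lambda>i j. x i j + y i j)"

definition gm_neg :: "('i \<Rightarrow> 'i \<Rightarrow> 'a::ab_group_add) \<Rightarrow> ('i \<Rightarrow> 'i \<Rightarrow> 'a)" where
  "gm_neg x = (\<lambda>i j. - x i j)"

definition gm_zero :: "'i \<Rightarrow> 'i \<Rightarrow> 'a::ab_group_add" where
  "gm_zero = (\<lambda>i j. 0)"

definition gm_mult :: "('i \<Rightarrow> 'i \<Rightarrow> 'i \<Rightarrow> 'a \<Rightarrow> 'a \<Rightarrow> 'a) \<Rightarrow> ('i \<Rightarrow> 'i \<Rightarrow> 'a::ab_group_add)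
     \<Rightarrow> ('i \<Rightarrow> 'i \<Rightarrow> 'a) \<Rightarrow> ('i \<Rightarrow> 'i \<Rightarrow> 'a)" where
  "gm_mult mult x y = (\<lambda>i j. \<Sum>k\<in>{k. x i k \<noteq> 0}. mult i k j (x i k) (y k j))"

definition gm_ring_ideal :: "('i \<Rightarrow> 'i \<Rightarrow> 'a::ab_group_add set) \<Rightarrow> ('i \<Rightarrow> 'i \<Rightarrow> 'i \<Rightarrow> 'a \<Rightarrow> 'a \<Rightarrow> 'a)
     \<Rightarrow> ('i \<Rightarrow> 'i \<Rightarrow> 'a) set \<Rightarrow> bool" where
  "gm_ring_ideal G mult B \<longleftrightarrow> B \<subseteq> gm_carrier G \<and> gm_zero \<in> B \<and>
     (\<forall>x\<in>B. \<forall>y\<in>B. gm_add x y \<in> B) \<and> (\<forall>x\<in>B. gm_neg x \<in> B) \<and>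
     (\<forall>a\<in>gm_carrier G. \<forall>b\<in>B. gm_mult mult a b \<in> B \<and> gm_mult mult b a \<in> B)"

definition gm_single :: "'i \<Rightarrow> 'i \<Rightarrow> 'a \<Rightarrow> ('i \<Rightarrow> 'i \<Rightarrow> 'a::ab_group_add)" where
  "gm_single i j x = (\<lambda>k l. if k = i \<and> l = j then x else 0)"

text \<open>gm ideal: an ideal B with B = sum of B_ij, B_ij subset A_ij, i.e. B contains the
  (i,j)-components of its elements.\<close>
definition gm_ideal :: "('i \<Rightarrow> 'i \<Rightarrow> 'a::ab_group_add set) \<Rightarrow> ('i \<Rightarrow> 'i \<Rightarrow> 'i \<Rightarrow> 'a \<Rightarrow> 'a \<Rightarrow> 'a)
     \<Rightarrow> ('i \<Rightarrow> 'i \<Rightarrow> 'a) set \<Rightarrow> bool" where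
  "gm_ideal G mult B \<longleftrightarrow> gm_ring_ideal G mult B \<and>
     (\<forall>x\<in>B. \<forall>i j. gm_single i j (x i j) \<in> B)"

definition gm_vn_regular :: "('i \<Rightarrow> 'i \<Rightarrow> 'a::ab_group_add set) \<Rightarrow> ('i \<Rightarrow> 'i \<Rightarrow> 'i \<Rightarrow> 'a \<Rightarrow> 'a \<Rightarrow> 'a)
     \<Rightarrow> ('i \<Rightarrow> 'i \<Rightarrow> 'a) \<Rightarrow> bool" where
  "gm_vn_regular G mult x \<longleftrightarrow> (\<exists>y\<in>gm_carrier G. x = gm_mult mult (gm_mult mult x y) x)"

text \<open>r_n(A): the largest ideal of A consisting of von Neumann regular elements,
  realised as the union of all such ideals.\<close>
definition rn_ring :: "('i \<Rightarrow> 'i \<Rightarrow> 'a::ab_group_add set) \<Rightarrow> ('i \<Rightarrow> 'i \<Rightarrow> 'i \<Rightarrow> 'a \<Rightarrow> 'a \<Rightarrow> 'a)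
     \<Rightarrow> ('i \<Rightarrow> 'i \<Rightarrow> 'a) set" where
  "rn_ring G mult = \<Union>{B. gm_ring_ideal G mult B \<and> (\<forall>x\<in>B. gm_vn_regular G mult x)}"

text \<open>A_ij as a Gamma-ring with Gamma = A_ji.\<close>
definition gamma_ideal :: "('i \<Rightarrow> 'i \<Rightarrow> 'a::ab_group_add set) \<Rightarrow> ('i \<Rightarrow> 'i \<Rightarrow> 'i \<Rightarrow> 'a \<Rightarrow> 'a \<Rightarrow> 'a)
     \<Rightarrow> 'i \<Rightarrow> 'i \<Rightarrow> 'a set \<Rightarrow> bool" where
  "gamma_ideal G mult i j B \<longleftrightarrow> B \<subseteq> G i j \<and> 0 \<in> B \<and>
     (\<forall>x\<in>B. \<forall>y\<in>B. x + y \<in> B) \<and> (\<forall>x\<in>B. - x \<in> B) \<and>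
     (\<forall>a\<in>G i j. \<forall>g\<in>G j i. \<forall>b\<in>B. mult i i j (mult i j i a g) b \<in> B) \<and>
     (\<forall>b\<in>B. \<forall>g\<in>G j i. \<forall>a\<in>G i j. mult i i j (mult i j i b g) a \<in> B)"

definition gamma_vn_regular :: "('i \<Rightarrow> 'i \<Rightarrow> 'a::ab_group_add set) \<Rightarrow> ('i \<Rightarrow> 'i \<Rightarrow> 'i \<Rightarrow> 'a \<Rightarrow> 'a \<Rightarrow> 'a)
     \<Rightarrow> 'i \<Rightarrow> 'i \<Rightarrow> 'a \<Rightarrow> bool" where
  "gamma_vn_regular G mult i j x \<longleftrightarrow> (\<exists>y\<in>G j i. x = mult i i j (mult i j i x y) x)"

text \<open>r_n(A_ij): the largest ideal of the Gamma-ring A_ij consisting of von Neumann regular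
  elements, realised as the union of all such ideals.\<close>
definition rn_gamma :: "('i \<Rightarrow> 'i \<Rightarrow> 'a::ab_group_add set) \<Rightarrow> ('i \<Rightarrow> 'i \<Rightarrow> 'i \<Rightarrow> 'a \<Rightarrow> 'a \<Rightarrow> 'a)
     \<Rightarrow> 'i \<Rightarrow> 'i \<Rightarrow> 'a set" where
  "rn_gamma G mult i j = \<Union>{B. gamma_ideal G mult i j B \<and> (\<forall>x\<in>B. gamma_vn_regular G mult i j x)}"

definition gm_nonzero_divisors :: "('i \<Rightarrow> 'i \<Rightarrow> 'a::ab_group_add set) \<Rightarrow> ('i \<Rightarrow> 'i \<Rightarrow> 'i \<Rightarrow> 'a \<Rightarrow> 'a \<Rightarrow> 'a) \<Rightarrow> bool" where
  "gm_nonzero_divisors G mult \<longleftrightarrow>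
     (\<forall>s t. \<exists>d\<in>G s t. d \<noteq> 0 \<and>
        (\<forall>i. \<forall>x\<in>G i s. x \<noteq> 0 \<longrightarrow> mult i s t x d \<noteq> 0) \<and>
        (\<forall>j. \<forall>y\<in>G t j. y \<noteq> 0 \<longrightarrow> mult s t j d y \<noteq> 0))"

end

theory Submission
  imports Defs "HOL-Library.Function_Algebras"
begin

text \<open>Let B be an ideal of the Gamma-ring A_ij consisting of regular elements. The matrices x
  with A_ik x_kl A_lj contained in B for all k, l form a gm ideal B* of A containing the matrix
  unit of every b in B. Cancelling gm non-zero divisors d, d' in d x_kl d' shows that every entry
  of an element of B* is regular; peeling off one entry and then one row at a time with the
  Brown-McCoy lemma (x is regular as soon as x - xyx is) shows that every element of B* is
  regular. So B* lies in r_n(A), hence B* = 0 by hypothesis and therefore B = 0.\<close>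

locale rng_on =
  fixes S :: "'b::ab_group_add set" and M :: "'b \<Rightarrow> 'b \<Rightarrow> 'b"
  assumes zero_closed: "0 \<in> S"
    and add_closed: "a \<in> S \<Longrightarrow> b \<in> S \<Longrightarrow> a + b \<in> S"
    and uminus_closed: "a \<in> S \<Longrightarrow> - a \<in> S"
    and mult_closed: "a \<in> S \<Longrightarrow> b \<in> S \<Longrightarrow> M a b \<in> S"
    and distrib_left: "a \<in> S \<Longrightarrow> b \<in> S \<Longrightarrow> c \<in> S \<Longrightarrow> M a (b + c) = M a b + M a c"
    and distrib_right: "a \<in> S \<Longrightarrow> b \<in> S \<Longrightarrow> c \<in> S \<Longrightarrow> M (a + b) c = M a c + M b c"
    and mult_assoc: "a \<in> S \<Longrightarrow> b \<in> S \<Longrightarrow> c \<in> S \<Longrightarrow> M (M a b) c = M a (M b c)"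
begin

definition regular :: "'b \<Rightarrow> bool" where
  "regular x \<longleftrightarrow> (\<exists>w\<in>S. x = M (M x w) x)"

lemma diff_closed: "a \<in> S \<Longrightarrow> b \<in> S \<Longrightarrow> a - b \<in> S"
  using add_closed[of a "- b"] uminus_closed[of b] by simp

lemma mult_zero_left: "a \<in> S \<Longrightarrow> M 0 a = 0"
  using distrib_right[of 0 0 a] zero_closed by simp

lemma mult_zero_right: "a \<in> S \<Longrightarrow> M a 0 = 0"
  using distrib_left[of a 0 0] zero_closed by simp

lemma mult_minus_left: "a \<in> S \<Longrightarrow> b \<in> S \<Longrightarrow> M (- a) b = - M a b"
  using distrib_right[of a "- a" b] uminus_closed[of a] mult_zero_left[of b]
  by (simp add: eq_neg_iff_add_eq_0 add.commute)

lemma mult_minus_right: "a \<in> S \<Longrightarrow> b \<in> S \<Longrightarrow> M a (- b) = - M a b"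
  using distrib_left[of a b "- b"] uminus_closed[of b] mult_zero_right[of a]
  by (simp add: eq_neg_iff_add_eq_0 add.commute)

lemma left_diff_distrib: "a \<in> S \<Longrightarrow> b \<in> S \<Longrightarrow> c \<in> S \<Longrightarrow> M (a - b) c = M a c - M b c"
  using distrib_right[of a "- b" c] uminus_closed[of b] mult_minus_left[of b c] by simp

lemma right_diff_distrib: "a \<in> S \<Longrightarrow> b \<in> S \<Longrightarrow> c \<in> S \<Longrightarrow> M a (b - c) = M a b - M a c"
  using distrib_left[of a b "- c"] uminus_closed[of c] mult_minus_right[of a c] by simp

lemma regular_zero: "regular 0"
  unfolding regular_def using zero_closed mult_zero_left by auto

text \<open>Brown-McCoy. If p = x - xyx satisfies p = pzp, then w = y + L - Lxy with L = z - yxz is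
  a witness for x, because xL = pz and hence xLx - xLxyx = pzp = p.\<close>

lemma regular_if_regular_diff:
  assumes x: "x \<in> S" and y: "y \<in> S" and reg: "regular (x - M (M x y) x)"
  shows "regular x"
proof -
  define p where "p = x - M (M x y) x"
  obtain z where z: "z \<in> S" and pzp: "M (M p z) p = p"
    using reg unfolding regular_def p_def[symmetric] by metis
  have p: "p \<in> S" unfolding p_def by (intro diff_closed mult_closed x y)
  define L where "L = z - M (M y x) z"
  have L: "L \<in> S" unfolding L_def by (intro diff_closed mult_closed x y z)
  have xL: "M x L = M p z"
    unfolding L_def p_def using x y z by (simp add: right_diff_distrib left_diff_distrib mult_closed mult_assoc)
  have "M (M x (L - M L (M x y))) x = M (M p z) x - M (M p z) (M (M x y) x)"
    using x y z L p
    by (simp add: right_diff_distrib left_diff_distrib mult_closed mult_assoc flip: xL)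
  also have "\<dots> = M (M p z) p"
    using x y z p by (simp add: right_diff_distrib mult_closed p_def)
  also have "\<dots> = p" by (rule pzp)
  finally have "M (M x (L - M L (M x y))) x = p" .
  then have "M (M x (y + (L - M L (M x y)))) x = x"
    using x y L by (simp add: distrib_left distrib_right diff_closed mult_closed p_def)
  moreover have "y + (L - M L (M x y)) \<in> S"
    by (intro add_closed diff_closed mult_closed x y L)
  ultimately show ?thesis unfolding regular_def by metis
qed

lemma regular_by_descent:
  fixes \<mu> :: "'b \<Rightarrow> 'c set"
  assumes X: "X \<subseteq> S"
    and finite: "\<And>x. x \<in> X \<Longrightarrow> finite (\<mu> x)"
    and base: "\<And>x. x \<in> X \<Longrightarrow> \<mu> x = {} \<Longrightarrow> x = 0"
    and step: "\<And>x. x \<in> X \<Longrightarrow> \<mu> x \<noteq> {} \<Longrightarrow>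
      \<exists>y\<in>S. x - M (M x y) x \<in> X \<and> \<mu> (x - M (M x y) x) \<subset> \<mu> x"
  shows "x \<in> X \<Longrightarrow> regular x"
proof (induction "card (\<mu> x)" arbitrary: x rule: less_induct)
  case less
  show ?case
  proof (cases "\<mu> x = {}")
    case True
    then show ?thesis using base[OF less.prems True] regular_zero by simp
  next
    case False
    then obtain y where y: "y \<in> S" and x': "x - M (M x y) x \<in> X"
      and smaller: "\<mu> (x - M (M x y) x) \<subset> \<mu> x"
      using step less.prems by blast
    have "card (\<mu> (x - M (M x y) x)) < card (\<mu> x)"
      using psubset_card_mono[OF finite[OF less.prems] smaller] .
    then have "regular (x - M (M x y) x)" using less.hyps x' by blast
    then show ?thesis using regular_if_regular_diff X less.prems y by blast
  qed
qed

end

locale gm_matrix_ring =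
  fixes G :: "'i \<Rightarrow> 'i \<Rightarrow> 'a::ab_group_add set"
    and mult :: "'i \<Rightarrow> 'i \<Rightarrow> 'i \<Rightarrow> 'a \<Rightarrow> 'a \<Rightarrow> 'a"
  assumes gm_ring: "gm_ring G mult"
begin

lemma zero_in [simp]: "0 \<in> G i j"
  using gm_ring unfolding gm_ring_def by simp

lemma add_in [simp]: "x \<in> G i j \<Longrightarrow> y \<in> G i j \<Longrightarrow> x + y \<in> G i j"
  using gm_ring unfolding gm_ring_def by simp

lemma uminus_in [simp]: "x \<in> G i j \<Longrightarrow> - x \<in> G i j"
  using gm_ring unfolding gm_ring_def by simp

lemma diff_in [simp]: "x \<in> G i j \<Longrightarrow> y \<in> G i j \<Longrightarrow> x - y \<in> G i j"
  using add_in[of x i j "- y"] by simp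

lemma mult_in [simp]: "x \<in> G i j \<Longrightarrow> y \<in> G j l \<Longrightarrow> mult i j l x y \<in> G i l"
  using gm_ring unfolding gm_ring_def by simp

lemma distrib_right:
  "x \<in> G i j \<Longrightarrow> x' \<in> G i j \<Longrightarrow> y \<in> G j l \<Longrightarrow> mult i j l (x + x') y = mult i j l x y + mult i j l x' y"
  using gm_ring unfolding gm_ring_def by simp

lemma distrib_left:
  "x \<in> G i j \<Longrightarrow> y \<in> G j l \<Longrightarrow> y' \<in> G j l \<Longrightarrow> mult i j l x (y + y') = mult i j l x y + mult i j l x y'"
  using gm_ring unfolding gm_ring_def by simp

lemma mult_assoc: "x \<in> G i j \<Longrightarrow> y \<in> G j l \<Longrightarrow> z \<in> G l m \<Longrightarrow>
    mult i l m (mult i j l x y) z = mult i j m x (mult j l m y z)"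
  using gm_ring unfolding gm_ring_def by simp

lemma mult_zero_left [simp]: "y \<in> G j l \<Longrightarrow> mult i j l 0 y = 0"
  using distrib_right[of 0 i j 0 y l] by simp

lemma mult_zero_right [simp]: "x \<in> G i j \<Longrightarrow> mult i j l x 0 = 0"
  using distrib_left[of x i j 0 l 0] by simp

lemma mult_minus_left: "x \<in> G i j \<Longrightarrow> y \<in> G j l \<Longrightarrow> mult i j l (- x) y = - mult i j l x y"
  using distrib_right[of x i j "- x" y l] by (simp add: eq_neg_iff_add_eq_0 add.commute)

lemma mult_minus_right: "x \<in> G i j \<Longrightarrow> y \<in> G j l \<Longrightarrow> mult i j l x (- y) = - mult i j l x y"
  using distrib_left[of x i j y l "- y"] by (simp add: eq_neg_iff_add_eq_0 add.commute)

lemma left_diff_distrib: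
  "x \<in> G i j \<Longrightarrow> x' \<in> G i j \<Longrightarrow> y \<in> G j l \<Longrightarrow> mult i j l (x - x') y = mult i j l x y - mult i j l x' y"
  using distrib_right[of x i j "- x'" y l] mult_minus_left[of x' i j y l] by simp

lemma right_diff_distrib:
  "x \<in> G i j \<Longrightarrow> y \<in> G j l \<Longrightarrow> y' \<in> G j l \<Longrightarrow> mult i j l x (y - y') = mult i j l x y - mult i j l x y'"
  using distrib_left[of x i j y l "- y'"] mult_minus_right[of x i j y' l] by simp

lemma sum_in: "finite F \<Longrightarrow> (\<And>k. k \<in> F \<Longrightarrow> f k \<in> G i j) \<Longrightarrow> sum f F \<in> G i j"
  by (induction F rule: finite_induct) auto

lemma mult_sum_right: "finite F \<Longrightarrow> (\<And>k. k \<in> F \<Longrightarrow> f k \<in> G j l) \<Longrightarrow> x \<in> G i j \<Longrightarrow>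
    mult i j l x (sum f F) = (\<Sum>k\<in>F. mult i j l x (f k))"
  by (induction F rule: finite_induct) (auto simp: distrib_left sum_in)

lemma mult_sum_left: "finite F \<Longrightarrow> (\<And>k. k \<in> F \<Longrightarrow> f k \<in> G i j) \<Longrightarrow> y \<in> G j l \<Longrightarrow>
    mult i j l (sum f F) y = (\<Sum>k\<in>F. mult i j l (f k) y)"
  by (induction F rule: finite_induct) (auto simp: distrib_right sum_in)

lemma carrier_entry: "x \<in> gm_carrier G \<Longrightarrow> x i j \<in> G i j"
  unfolding gm_carrier_def by blast

lemma carrier_finite_support: "x \<in> gm_carrier G \<Longrightarrow> finite {(i, j). x i j \<noteq> 0}"
  unfolding gm_carrier_def by blast

lemma carrier_finite_row_support: "x \<in> gm_carrier G \<Longrightarrow> finite {k. x i k \<noteq> 0}"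
  by (rule finite_surj[OF carrier_finite_support, of x _ snd]) (auto simp: image_iff)

lemma carrier_finite_rows: "x \<in> gm_carrier G \<Longrightarrow> finite {i. \<exists>k. x i k \<noteq> 0}"
  by (rule finite_surj[OF carrier_finite_support, of x _ fst]) (auto simp: image_iff)

lemma carrier_finite_cols: "x \<in> gm_carrier G \<Longrightarrow> finite {j. \<exists>k. x k j \<noteq> 0}"
  by (rule finite_surj[OF carrier_finite_support, of x _ snd]) (auto simp: image_iff)

lemma gm_mult_eq_sum:
  assumes x: "x \<in> gm_carrier G" and y: "y \<in> gm_carrier G" and F: "finite F"
    and outside: "\<And>k. k \<notin> F \<Longrightarrow> x i k = 0 \<or> y k j = 0"
  shows "gm_mult mult x y i j = (\<Sum>k\<in>F. mult i k j (x i k) (y k j))"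
proof -
  let ?f = "\<lambda>k. mult i k j (x i k) (y k j)"
  let ?E = "{k. x i k \<noteq> 0}"
  have E: "finite ?E" by (rule carrier_finite_row_support[OF x])
  have vanish: "?f k = 0" if "k \<notin> F" for k
    using outside[OF that] x y by (auto simp: carrier_entry)
  have "gm_mult mult x y i j = sum ?f ?E" unfolding gm_mult_def by simp
  also have "\<dots> = sum ?f (?E \<union> F)"
    by (rule sum.mono_neutral_left) (use E F x y in \<open>auto simp: carrier_entry\<close>)
  also have "\<dots> = sum ?f F"
    by (rule sum.mono_neutral_right) (use E F vanish in auto)
  finally show ?thesis .
qed

lemma gm_mult_eq_single_index:
  assumes "x \<in> gm_carrier G" and "y \<in> gm_carrier G"
    and "\<And>q. q \<noteq> k \<Longrightarrow> x i q = 0 \<or> y q j = 0"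
  shows "gm_mult mult x y i j = mult i k j (x i k) (y k j)"
  using gm_mult_eq_sum[of x y "{k}"] assms by simp

lemma carrier_zero [simp]: "0 \<in> gm_carrier G"
  unfolding gm_carrier_def by simp

lemma carrier_add [simp]: "x \<in> gm_carrier G \<Longrightarrow> y \<in> gm_carrier G \<Longrightarrow> x + y \<in> gm_carrier G"
proof -
  assume x: "x \<in> gm_carrier G" and y: "y \<in> gm_carrier G"
  have "{(i, j). (x + y) i j \<noteq> 0} \<subseteq> {(i, j). x i j \<noteq> 0} \<union> {(i, j). y i j \<noteq> 0}" by auto
  then show ?thesis using x y unfolding gm_carrier_def by (auto intro: finite_subset)
qed

lemma carrier_uminus [simp]: "x \<in> gm_carrier G \<Longrightarrow> - x \<in> gm_carrier G"
  unfolding gm_carrier_def by simp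

lemma carrier_restrict:
  assumes x: "x \<in> gm_carrier G"
  shows "(\<lambda>i j. if P i j then x i j else 0) \<in> gm_carrier G"
proof -
  have "{(i, j). (if P i j then x i j else 0) \<noteq> 0} \<subseteq> {(i, j). x i j \<noteq> 0}" by auto
  then show ?thesis
    using x unfolding gm_carrier_def by (simp add: finite_subset)
qed

lemma carrier_single [simp]: "u \<in> G a b \<Longrightarrow> gm_single a b u \<in> gm_carrier G"
proof -
  assume u: "u \<in> G a b"
  have "{(i, j). gm_single a b u i j \<noteq> 0} \<subseteq> {(a, b)}" by (auto simp: gm_single_def)
  then show ?thesis
    using u unfolding gm_carrier_def by (auto simp: gm_single_def intro: finite_subset)
qed

lemma carrier_mult [simp]:
  assumes x: "x \<in> gm_carrier G" and y: "y \<in> gm_carrier G"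
  shows "gm_mult mult x y \<in> gm_carrier G"
proof -
  have entries: "gm_mult mult x y i j \<in> G i j" for i j
    unfolding gm_mult_def
    by (rule sum_in[OF carrier_finite_row_support[OF x]]) (simp add: carrier_entry x y)
  have "gm_mult mult x y i j = 0" if "\<forall>k. x i k = 0 \<or> y k j = 0" for i j
    using gm_mult_eq_sum[OF x y, of "{}"] that by simp
  then have "{(i, j). gm_mult mult x y i j \<noteq> 0} \<subseteq> {i. \<exists>k. x i k \<noteq> 0} \<times> {j. \<exists>k. y k j \<noteq> 0}"
    by blast
  then have "finite {(i, j). gm_mult mult x y i j \<noteq> 0}"
    using carrier_finite_rows[OF x] carrier_finite_cols[OF y] by (auto intro: finite_subset)
  with entries show ?thesis unfolding gm_carrier_def by blast
qed

lemma gm_mult_distrib_left: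
  assumes x: "x \<in> gm_carrier G" and y: "y \<in> gm_carrier G" and z: "z \<in> gm_carrier G"
  shows "gm_mult mult x (y + z) = gm_mult mult x y + gm_mult mult x z"
  using x y z by (intro ext) (simp add: gm_mult_def distrib_left carrier_entry sum.distrib)

lemma gm_mult_distrib_right:
  assumes x: "x \<in> gm_carrier G" and y: "y \<in> gm_carrier G" and z: "z \<in> gm_carrier G"
  shows "gm_mult mult (x + y) z = gm_mult mult x z + gm_mult mult y z"
proof (intro ext)
  fix i j
  let ?F = "{k. x i k \<noteq> 0} \<union> {k. y i k \<noteq> 0}"
  have F: "finite ?F"
    using carrier_finite_row_support[OF x] carrier_finite_row_support[OF y] by simp
  have "gm_mult mult (x + y) z i j = (\<Sum>k\<in>?F. mult i k j ((x + y) i k) (z k j))"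
    and "gm_mult mult x z i j = (\<Sum>k\<in>?F. mult i k j (x i k) (z k j))"
    and "gm_mult mult y z i j = (\<Sum>k\<in>?F. mult i k j (y i k) (z k j))"
    by (rule gm_mult_eq_sum; use x y z F in auto)+
  then show "gm_mult mult (x + y) z i j = (gm_mult mult x z + gm_mult mult y z) i j"
    using x y z by (simp add: distrib_right carrier_entry sum.distrib)
qed

lemma gm_mult_assoc:
  assumes x: "x \<in> gm_carrier G" and y: "y \<in> gm_carrier G" and z: "z \<in> gm_carrier G"
  shows "gm_mult mult (gm_mult mult x y) z = gm_mult mult x (gm_mult mult y z)"
proof (intro ext)
  fix i j
  let ?F = "{k. x i k \<noteq> 0}" and ?L = "{l. \<exists>k. y k l \<noteq> 0}"
  have F: "finite ?F" using carrier_finite_row_support[OF x] .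
  have L: "finite ?L" using carrier_finite_cols[OF y] .
  have xy: "gm_mult mult x y i l = (\<Sum>k\<in>?F. mult i k l (x i k) (y k l))" for l
    by (rule gm_mult_eq_sum) (use x y F in auto)
  have yz: "gm_mult mult y z k j = (\<Sum>l\<in>?L. mult k l j (y k l) (z l j))" for k
    by (rule gm_mult_eq_sum) (use y z L in auto)
  have "gm_mult mult (gm_mult mult x y) z i j
      = (\<Sum>l\<in>?L. mult i l j (gm_mult mult x y i l) (z l j))"
    by (rule gm_mult_eq_sum) (use x y z L xy in \<open>auto simp: carrier_entry\<close>)
  also have "\<dots> = (\<Sum>l\<in>?L. \<Sum>k\<in>?F. mult i l j (mult i k l (x i k) (y k l)) (z l j))"
    using x y z F by (simp add: xy mult_sum_left carrier_entry)
  also have "\<dots> = (\<Sum>k\<in>?F. \<Sum>l\<in>?L. mult i k j (x i k) (mult k l j (y k l) (z l j)))"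
    using x y z by (subst sum.swap) (simp add: mult_assoc carrier_entry)
  also have "\<dots> = (\<Sum>k\<in>?F. mult i k j (x i k) (gm_mult mult y z k j))"
    using x y z L by (simp add: yz mult_sum_right carrier_entry)
  also have "\<dots> = gm_mult mult x (gm_mult mult y z) i j"
    unfolding gm_mult_def by simp
  finally show "gm_mult mult (gm_mult mult x y) z i j = gm_mult mult x (gm_mult mult y z) i j" .
qed

sublocale A: rng_on "gm_carrier G" "gm_mult mult"
  by unfold_locales (auto simp: gm_mult_distrib_left gm_mult_distrib_right gm_mult_assoc)

lemma A_regular_eq: "A.regular = gm_vn_regular G mult"
  unfolding A.regular_def gm_vn_regular_def by (intro ext) (rule refl)

lemma gm_mult_single_right:
  assumes x: "x \<in> gm_carrier G" and v: "v \<in> G b c"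
  shows "gm_mult mult x (gm_single b c v) i j = (if j = c then mult i b c (x i b) v else 0)"
  using gm_mult_eq_single_index[OF x carrier_single[OF v], of b] x v
  by (simp add: gm_single_def carrier_entry)

lemma gamma_ideal_zero: "gamma_ideal G mult i j {0}"
  unfolding gamma_ideal_def by simp

lemma gamma_vn_regular_zero: "gamma_vn_regular G mult i j 0"
  unfolding gamma_vn_regular_def by (rule bexI[of _ 0]) simp_all

end

locale regular_gamma_ideal = gm_matrix_ring G mult
  for G :: "'i \<Rightarrow> 'i \<Rightarrow> 'a::ab_group_add set" and mult +
  fixes i0 j0 :: 'i and B :: "'a set"
  assumes ideal: "gamma_ideal G mult i0 j0 B"
    and regular: "\<forall>b\<in>B. gamma_vn_regular G mult i0 j0 b"
begin

lemma B_in: "b \<in> B \<Longrightarrow> b \<in> G i0 j0"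
  using ideal unfolding gamma_ideal_def by blast

lemma B_add: "b \<in> B \<Longrightarrow> b' \<in> B \<Longrightarrow> b + b' \<in> B"
  using ideal unfolding gamma_ideal_def by blast

lemma B_uminus: "b \<in> B \<Longrightarrow> - b \<in> B"
  using ideal unfolding gamma_ideal_def by blast

lemma B_mult_left:
  "a \<in> G i0 j0 \<Longrightarrow> g \<in> G j0 i0 \<Longrightarrow> b \<in> B \<Longrightarrow> mult i0 i0 j0 (mult i0 j0 i0 a g) b \<in> B"
  using ideal unfolding gamma_ideal_def by blast

lemma B_mult_right:
  "b \<in> B \<Longrightarrow> g \<in> G j0 i0 \<Longrightarrow> a \<in> G i0 j0 \<Longrightarrow> mult i0 i0 j0 (mult i0 j0 i0 b g) a \<in> B"
  using ideal unfolding gamma_ideal_def by blast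

lemma B_regular:
  assumes "b \<in> B"
  obtains y where "y \<in> G j0 i0" and "mult i0 i0 j0 (mult i0 j0 i0 b y) b = b"
  using regular assms unfolding gamma_vn_regular_def by metis

text \<open>Regularity lets B absorb all of A_ii on the left (and of A_jj on the right), not just
  the products A_ij A_ji appearing in the definition of a Gamma-ideal.\<close>

lemma B_mult_corner_left:
  assumes b: "b \<in> B" and p: "p \<in> G i0 i0"
  shows "mult i0 i0 j0 p b \<in> B"
proof -
  obtain y where y: "y \<in> G j0 i0" and byb: "mult i0 i0 j0 (mult i0 j0 i0 b y) b = b"
    using B_regular[OF b] .
  have "mult i0 i0 j0 p b = mult i0 i0 j0 p (mult i0 i0 j0 (mult i0 j0 i0 b y) b)"
    by (simp only: byb)
  also have "\<dots> = mult i0 i0 j0 (mult i0 j0 i0 (mult i0 i0 j0 p b) y) b"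
    using B_in[OF b] y p by (simp add: mult_assoc)
  also have "\<dots> \<in> B" using B_mult_left B_in[OF b] y p b by simp
  finally show ?thesis .
qed

lemma B_mult_corner_right:
  assumes b: "b \<in> B" and q: "q \<in> G j0 j0"
  shows "mult i0 j0 j0 b q \<in> B"
proof -
  obtain y where y: "y \<in> G j0 i0" and byb: "mult i0 i0 j0 (mult i0 j0 i0 b y) b = b"
    using B_regular[OF b] .
  have "mult i0 j0 j0 b q = mult i0 j0 j0 (mult i0 i0 j0 (mult i0 j0 i0 b y) b) q"
    by (simp only: byb)
  also have "\<dots> = mult i0 i0 j0 (mult i0 j0 i0 b y) (mult i0 j0 j0 b q)"
    using B_in[OF b] y q by (simp add: mult_assoc)
  also have "\<dots> \<in> B" using B_mult_right B_in[OF b] y q b by simp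
  finally show ?thesis .
qed

definition induced_entries :: "'i \<Rightarrow> 'i \<Rightarrow> 'a set" where
  "induced_entries k l =
    {u \<in> G k l. \<forall>p\<in>G i0 k. \<forall>q\<in>G l j0. mult i0 l j0 (mult i0 k l p u) q \<in> B}"

definition induced :: "('i \<Rightarrow> 'i \<Rightarrow> 'a) set" where
  "induced = {x \<in> gm_carrier G. \<forall>k l. x k l \<in> induced_entries k l}"

lemma induced_entries_in: "u \<in> induced_entries k l \<Longrightarrow> u \<in> G k l"
  unfolding induced_entries_def by blast

lemma induced_entries_zero [simp]: "0 \<in> induced_entries k l"
  unfolding induced_entries_def using ideal by (simp add: gamma_ideal_def)

lemma induced_entries_add:
  "u \<in> induced_entries k l \<Longrightarrow> v \<in> induced_entries k l \<Longrightarrow> u + v \<in> induced_entries k l"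
  unfolding induced_entries_def by (auto simp: distrib_left distrib_right intro!: B_add)

lemma induced_entries_uminus: "u \<in> induced_entries k l \<Longrightarrow> - u \<in> induced_entries k l"
  unfolding induced_entries_def by (auto simp: mult_minus_left mult_minus_right intro!: B_uminus)

lemma induced_entries_sum:
  "finite F \<Longrightarrow> (\<And>t. t \<in> F \<Longrightarrow> f t \<in> induced_entries k l) \<Longrightarrow> sum f F \<in> induced_entries k l"
  by (induction F rule: finite_induct) (auto intro: induced_entries_add)

lemma induced_entries_mult_left:
  assumes c: "c \<in> G m k" and u: "u \<in> induced_entries k l"
  shows "mult m k l c u \<in> induced_entries m l"
  unfolding induced_entries_def
proof (intro CollectI conjI ballI)
  have uG: "u \<in> G k l" using induced_entries_in[OF u] .
  show "mult m k l c u \<in> G m l" using c uG by simp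
  fix p q assume p: "p \<in> G i0 m" and q: "q \<in> G l j0"
  have "mult i0 l j0 (mult i0 m l p (mult m k l c u)) q
      = mult i0 l j0 (mult i0 k l (mult i0 m k p c) u) q"
    using p c uG by (simp add: mult_assoc)
  also have "\<dots> \<in> B" using u p c q unfolding induced_entries_def by simp
  finally show "mult i0 l j0 (mult i0 m l p (mult m k l c u)) q \<in> B" .
qed

lemma induced_entries_mult_right:
  assumes c: "c \<in> G l n" and u: "u \<in> induced_entries k l"
  shows "mult k l n u c \<in> induced_entries k n"
  unfolding induced_entries_def
proof (intro CollectI conjI ballI)
  have uG: "u \<in> G k l" using induced_entries_in[OF u] .
  show "mult k l n u c \<in> G k n" using c uG by simp
  fix p q assume p: "p \<in> G i0 k" and q: "q \<in> G n j0"
  have "mult i0 n j0 (mult i0 k n p (mult k l n u c)) q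
      = mult i0 l j0 (mult i0 k l p u) (mult l n j0 c q)"
    using p q c uG by (simp add: mult_assoc)
  also have "\<dots> \<in> B" using u p c q unfolding induced_entries_def by simp
  finally show "mult i0 n j0 (mult i0 k n p (mult k l n u c)) q \<in> B" .
qed

lemma B_subset_induced_entries: "B \<subseteq> induced_entries i0 j0"
  unfolding induced_entries_def using B_in B_mult_corner_left B_mult_corner_right by auto

lemma induced_carrier: "x \<in> induced \<Longrightarrow> x \<in> gm_carrier G"
  unfolding induced_def by blast

lemma induced_entry: "x \<in> induced \<Longrightarrow> x k l \<in> induced_entries k l"
  unfolding induced_def by blast

lemma induced_restrict:
  "x \<in> induced \<Longrightarrow> (\<lambda>i j. if P i j then x i j else 0) \<in> induced"
  unfolding induced_def by (auto intro: carrier_restrict)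

lemma induced_diff: "x \<in> induced \<Longrightarrow> y \<in> induced \<Longrightarrow> x - y \<in> induced"
  using induced_entries_add[OF _ induced_entries_uminus]
  unfolding induced_def by (simp add: carrier_add[of x "- y", simplified])

lemma induced_mult_left:
  assumes a: "a \<in> gm_carrier G" and x: "x \<in> induced"
  shows "gm_mult mult a x \<in> induced"
proof -
  have "gm_mult mult a x k l \<in> induced_entries k l" for k l
    unfolding gm_mult_def
    by (rule induced_entries_sum[OF carrier_finite_row_support[OF a]])
      (simp add: induced_entries_mult_left carrier_entry[OF a] induced_entry[OF x])
  then show ?thesis using a induced_carrier[OF x] unfolding induced_def by simp
qed

lemma induced_mult_right:
  assumes a: "a \<in> gm_carrier G" and x: "x \<in> induced"
  shows "gm_mult mult x a \<in> induced"
proof -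
  have "gm_mult mult x a k l \<in> induced_entries k l" for k l
    unfolding gm_mult_def
    by (rule induced_entries_sum[OF carrier_finite_row_support[OF induced_carrier[OF x]]])
      (simp add: induced_entries_mult_right carrier_entry[OF a] induced_entry[OF x])
  then show ?thesis using a induced_carrier[OF x] unfolding induced_def by simp
qed

lemma induced_gm_ring_ideal: "gm_ring_ideal G mult induced"
proof -
  have ops: "gm_zero = 0" "gm_add x y = x + y" "gm_neg x = - x" for x y :: "'i \<Rightarrow> 'i \<Rightarrow> 'a"
    unfolding gm_zero_def gm_add_def gm_neg_def by (auto intro!: ext)
  show ?thesis
    unfolding gm_ring_ideal_def ops using induced_mult_left induced_mult_right
    by (auto simp: induced_def intro: induced_entries_add induced_entries_uminus)
qed

lemma induced_gm_ideal: "gm_ideal G mult induced"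
proof -
  have "gm_single i j (x i j) = (\<lambda>k l. if k = i \<and> l = j then x k l else 0)"
    for x :: "'i \<Rightarrow> 'i \<Rightarrow> 'a" and i j
    unfolding gm_single_def by (intro ext) auto
  then show ?thesis
    unfolding gm_ideal_def using induced_gm_ring_ideal induced_restrict by auto
qed

lemma single_in_induced: "b \<in> B \<Longrightarrow> gm_single i0 j0 b \<in> induced"
  using B_subset_induced_entries B_in carrier_single[of b i0 j0]
  unfolding induced_def by (auto simp: gm_single_def)

text \<open>With d, d' gm non-zero divisors and v = d u d' = v w v, the element z = d' w d works:
  d (u - u z u) d' = v - v w v = 0, and d, d' cancel.\<close>

lemma induced_entry_regular:
  assumes nzd: "gm_nonzero_divisors G mult" and u: "u \<in> induced_entries k l"
  obtains z where "z \<in> G l k" and "mult k k l (mult k l k u z) u = u"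
proof -
  have uG: "u \<in> G k l" using induced_entries_in[OF u] .
  obtain d1 where d1: "d1 \<in> G i0 k"
    and d1_cancel: "\<forall>j. \<forall>y\<in>G k j. y \<noteq> 0 \<longrightarrow> mult i0 k j d1 y \<noteq> 0"
    using nzd unfolding gm_nonzero_divisors_def by blast
  obtain d2 where d2: "d2 \<in> G l j0"
    and d2_cancel: "\<forall>i. \<forall>x\<in>G i l. x \<noteq> 0 \<longrightarrow> mult i l j0 x d2 \<noteq> 0"
    using nzd unfolding gm_nonzero_divisors_def by blast
  define v where "v = mult i0 l j0 (mult i0 k l d1 u) d2"
  have "v \<in> B" using u d1 d2 unfolding induced_entries_def v_def by blast
  then obtain w where w: "w \<in> G j0 i0" and vwv: "mult i0 i0 j0 (mult i0 j0 i0 v w) v = v"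
    by (rule B_regular)
  define z where "z = mult l i0 k (mult l j0 i0 d2 w) d1"
  have z: "z \<in> G l k" unfolding z_def using d1 d2 w by simp
  define r where "r = u - mult k k l (mult k l k u z) u"
  have r: "r \<in> G k l" unfolding r_def using uG z by simp
  have "mult i0 l j0 (mult i0 k l d1 (mult k k l (mult k l k u z) u)) d2
      = mult i0 i0 j0 (mult i0 j0 i0 v w) v"
    unfolding z_def v_def using d1 d2 w uG by (simp add: mult_assoc)
  also have "\<dots> = mult i0 l j0 (mult i0 k l d1 u) d2" using vwv by (simp add: v_def)
  finally have "mult i0 l j0 (mult i0 k l d1 r) d2 = 0"
    unfolding r_def using d1 d2 uG z by (simp add: left_diff_distrib right_diff_distrib)
  then have "mult i0 k l d1 r = 0" using d2_cancel d1 r by (meson mult_in)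
  then have "r = 0" using d1_cancel r by blast
  then show ?thesis using that z unfolding r_def by simp
qed

text \<open>The witness is the matrix unit of t at (n, k), where x_kn t x_kn = x_kn.\<close>

lemma row_reduction:
  assumes nzd: "gm_nonzero_divisors G mult" and x: "x \<in> induced"
    and row: "\<forall>i j. x i j \<noteq> 0 \<longrightarrow> i = k" and ne: "x k n \<noteq> 0"
  shows "\<exists>y\<in>gm_carrier G. x - gm_mult mult (gm_mult mult x y) x \<in> induced
    \<and> (\<forall>i j. (x - gm_mult mult (gm_mult mult x y) x) i j \<noteq> 0 \<longrightarrow> i = k)
    \<and> {(i, j). (x - gm_mult mult (gm_mult mult x y) x) i j \<noteq> 0} \<subset> {(i, j). x i j \<noteq> 0}"
proof -
  have xc: "x \<in> gm_carrier G" using induced_carrier[OF x] .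
  obtain t where t: "t \<in> G n k" and xtx: "mult k k n (mult k n k (x k n) t) (x k n) = x k n"
    using induced_entry_regular[OF nzd induced_entry[OF x]] .
  define y where "y = gm_single n k t"
  have y: "y \<in> gm_carrier G" unfolding y_def using t by simp
  have xy: "gm_mult mult x y i q = (if q = k then mult i n k (x i n) t else 0)" for i q
    unfolding y_def using gm_mult_single_right[OF xc t] .
  have xyx: "gm_mult mult (gm_mult mult x y) x i j = mult i k j (mult i n k (x i n) t) (x k j)"
    for i j
    using gm_mult_eq_single_index[OF carrier_mult[OF xc y] xc, of k] by (simp add: xy)
  define x' where "x' = x - gm_mult mult (gm_mult mult x y) x"
  have x'_eq: "x' i j = (if i = k then x k j - mult k k j (mult k n k (x k n) t) (x k j) else 0)"
    for i j
  proof (cases "i = k")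
    case False
    then have "x i n = 0" "x i j = 0" using row by blast+
    then show ?thesis using False xc t by (simp add: x'_def xyx carrier_entry)
  qed (simp add: x'_def xyx)
  have "x' \<in> induced" unfolding x'_def by (intro induced_diff induced_mult_right x y xc)
  moreover have "\<forall>i j. x' i j \<noteq> 0 \<longrightarrow> i = k" by (simp add: x'_eq)
  moreover have "{(i, j). x' i j \<noteq> 0} \<subset> {(i, j). x i j \<noteq> 0}"
  proof -
    have "x' i j = 0" if "x i j = 0" for i j
      using that xc t by (cases "i = k") (simp_all add: x'_eq carrier_entry)
    moreover have "x' k n = 0" using xtx by (simp add: x'_eq)
    ultimately show ?thesis using ne by blast
  qed
  ultimately show ?thesis using y unfolding x'_def by blast
qed

lemma induced_row_regular:
  assumes nzd: "gm_nonzero_divisors G mult" and x: "x \<in> induced"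
    and row: "\<forall>i j. x i j \<noteq> 0 \<longrightarrow> i = k"
  shows "gm_vn_regular G mult x"
proof -
  let ?X = "{x \<in> induced. \<forall>i j. x i j \<noteq> 0 \<longrightarrow> i = k}"
  have "A.regular x"
  proof (rule A.regular_by_descent[where \<mu> = "\<lambda>x. {(i, j). x i j \<noteq> 0}"])
    show "?X \<subseteq> gm_carrier G" using induced_carrier by blast
    show "finite {(i, j). z i j \<noteq> 0}" if "z \<in> ?X" for z
      using that by (blast intro: carrier_finite_support induced_carrier)
    show "z = 0" if "{(i, j). z i j \<noteq> 0} = {}" for z :: "'i \<Rightarrow> 'i \<Rightarrow> 'a"
      using that by (auto intro!: ext)
    show "\<exists>y\<in>gm_carrier G. z - gm_mult mult (gm_mult mult z y) z \<in> ?X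
        \<and> {(i, j). (z - gm_mult mult (gm_mult mult z y) z) i j \<noteq> 0} \<subset> {(i, j). z i j \<noteq> 0}"
      if z: "z \<in> ?X" and ne: "{(i, j). z i j \<noteq> 0} \<noteq> {}" for z
    proof -
      have z_induced: "z \<in> induced" and z_row: "\<forall>i j. z i j \<noteq> 0 \<longrightarrow> i = k" using z by auto
      obtain i n where "z i n \<noteq> 0" using ne by auto
      then have "z k n \<noteq> 0" using z_row by blast
      then obtain y where "y \<in> gm_carrier G" "z - gm_mult mult (gm_mult mult z y) z \<in> induced"
        "\<forall>i j. (z - gm_mult mult (gm_mult mult z y) z) i j \<noteq> 0 \<longrightarrow> i = k"
        "{(i, j). (z - gm_mult mult (gm_mult mult z y) z) i j \<noteq> 0} \<subset> {(i, j). z i j \<noteq> 0}"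
        using row_reduction[of z k n, OF nzd z_induced z_row] by blast
      then show ?thesis by blast
    qed
    show "x \<in> ?X" using x row by blast
  qed
  then show ?thesis by (simp add: A_regular_eq)
qed

text \<open>The witness is the column-k part y' of a y regularising the row-k part of x: then
  (x y' x)_ij = (x y)_ik x_kj, which agrees with x on row k.\<close>

lemma rows_reduction:
  assumes nzd: "gm_nonzero_divisors G mult" and x: "x \<in> induced" and ne: "x k n \<noteq> 0"
  shows "\<exists>y\<in>gm_carrier G. x - gm_mult mult (gm_mult mult x y) x \<in> induced
    \<and> {i. \<exists>j. (x - gm_mult mult (gm_mult mult x y) x) i j \<noteq> 0} \<subset> {i. \<exists>j. x i j \<noteq> 0}"
proof -
  have xc: "x \<in> gm_carrier G" using induced_carrier[OF x] .
  define x1 where "x1 = (\<lambda>i j. if i = k then x i j else 0)"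
  have x1: "x1 \<in> induced" unfolding x1_def by (rule induced_restrict[OF x])
  have x1c: "x1 \<in> gm_carrier G" using induced_carrier[OF x1] .
  have "gm_vn_regular G mult x1" by (rule induced_row_regular[OF nzd x1, of k]) (simp add: x1_def)
  then obtain y where y: "y \<in> gm_carrier G" and x1yx1: "x1 = gm_mult mult (gm_mult mult x1 y) x1"
    unfolding gm_vn_regular_def by blast
  define y' where "y' = (\<lambda>i j. if j = k then y i j else 0)"
  have y': "y' \<in> gm_carrier G" unfolding y'_def by (rule carrier_restrict[OF y])
  have xy': "gm_mult mult x y' i q = (if q = k then gm_mult mult x y i k else 0)" for i q
    unfolding gm_mult_def y'_def using xc y by (simp add: carrier_entry)
  have xy'x: "gm_mult mult (gm_mult mult x y') x i j = mult i k j (gm_mult mult x y i k) (x k j)"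
    for i j
    using gm_mult_eq_single_index[OF carrier_mult[OF xc y'] xc, of k] by (simp add: xy')
  have row_k: "x k j = mult k k j (gm_mult mult x y k k) (x k j)" for j
  proof -
    have "x k j = gm_mult mult (gm_mult mult x1 y) x1 k j"
      using fun_cong[OF fun_cong[OF x1yx1, of k], of j] by (simp add: x1_def)
    also have "\<dots> = mult k k j (gm_mult mult x1 y k k) (x1 k j)"
      by (rule gm_mult_eq_single_index[OF carrier_mult[OF x1c y] x1c]) (simp add: x1_def)
    also have "gm_mult mult x1 y k k = gm_mult mult x y k k"
      unfolding gm_mult_def x1_def by simp
    finally show ?thesis by (simp add: x1_def)
  qed
  define x' where "x' = x - gm_mult mult (gm_mult mult x y') x"
  have "x' \<in> induced" unfolding x'_def by (intro induced_diff induced_mult_right x y' xc)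
  moreover have "{i. \<exists>j. x' i j \<noteq> 0} \<subset> {i. \<exists>j. x i j \<noteq> 0}"
  proof -
    have "x' k j = 0" for j using row_k[of j] by (simp add: x'_def xy'x)
    moreover have "x' i j = 0" if "\<forall>l. x i l = 0" for i j
      using that xc by (simp add: x'_def xy'x gm_mult_def carrier_entry)
    ultimately show ?thesis using ne by blast
  qed
  ultimately show ?thesis using y' unfolding x'_def by blast
qed

lemma induced_regular:
  assumes nzd: "gm_nonzero_divisors G mult" and x: "x \<in> induced"
  shows "gm_vn_regular G mult x"
proof -
  have "A.regular x"
  proof (rule A.regular_by_descent[where \<mu> = "\<lambda>x. {i. \<exists>j. x i j \<noteq> 0}"])
    show "induced \<subseteq> gm_carrier G" using induced_carrier by blast
    show "finite {i. \<exists>j. z i j \<noteq> 0}" if "z \<in> induced" for z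
      using carrier_finite_rows[OF induced_carrier[OF that]] .
    show "z = 0" if "{i. \<exists>j. z i j \<noteq> 0} = {}" for z :: "'i \<Rightarrow> 'i \<Rightarrow> 'a"
      using that by (auto intro!: ext)
    show "\<exists>y\<in>gm_carrier G. z - gm_mult mult (gm_mult mult z y) z \<in> induced
        \<and> {i. \<exists>j. (z - gm_mult mult (gm_mult mult z y) z) i j \<noteq> 0} \<subset> {i. \<exists>j. z i j \<noteq> 0}"
      if "z \<in> induced" and "{i. \<exists>j. z i j \<noteq> 0} \<noteq> {}" for z
      using that rows_reduction[OF nzd] by blast
  qed (rule x)
  then show ?thesis by (simp add: A_regular_eq)
qed

lemma B_trivial:
  assumes nzd: "gm_nonzero_divisors G mult"
    and no_regular_gm_ideal: "\<forall>C. gm_ideal G mult C \<and> C \<subseteq> rn_ring G mult \<longrightarrow> C = {gm_zero}"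
  shows "B \<subseteq> {0}"
proof
  fix b assume b: "b \<in> B"
  have "induced \<subseteq> rn_ring G mult"
    unfolding rn_ring_def using induced_gm_ring_ideal induced_regular[OF nzd] by blast
  then have "induced = {gm_zero}" using no_regular_gm_ideal induced_gm_ideal by blast
  then have "gm_single i0 j0 b i0 j0 = 0"
    using single_in_induced[OF b] by (simp add: gm_zero_def)
  then show "b \<in> {0}" by (simp add: gm_single_def)
qed

end

theorem lemma2p2:
  fixes G :: "'i \<Rightarrow> 'i \<Rightarrow> 'a::ab_group_add set"
    and mult :: "'i \<Rightarrow> 'i \<Rightarrow> 'i \<Rightarrow> 'a \<Rightarrow> 'a \<Rightarrow> 'a"
  assumes "gm_ring G mult"
    and "gm_nonzero_divisors G mult"
    and "\<forall>B. gm_ideal G mult B \<and> B \<subseteq> rn_ring G mult \<longrightarrow> B = {gm_zero}"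
  shows "\<forall>i j. rn_gamma G mult i j = {0}"
proof (intro allI)
  fix i j
  interpret gm_matrix_ring G mult by (rule gm_matrix_ring.intro) (rule assms(1))
  have "B \<subseteq> {0}" if "gamma_ideal G mult i j B" and "\<forall>b\<in>B. gamma_vn_regular G mult i j b" for B
  proof -
    have "regular_gamma_ideal G mult i j B"
      by unfold_locales (rule that(1), rule that(2))
    then show ?thesis by (rule regular_gamma_ideal.B_trivial[OF _ assms(2,3)])
  qed
  with gamma_ideal_zero gamma_vn_regular_zero show "rn_gamma G mult i j = {0}"
    unfolding rn_gamma_def by blast
qed

end
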